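(* Let $\mathbf p\in\mathbb{Z}^2\setminus\{\mathbf0\}$ and $\mathbf a\in\mathbb{Z}^2$ with $|\mathbf a|<|\mathbf p|$ and $|\mathbf a+k\mathbf p|>|\mathbf p|$ for all $k\in\mathbb{Z}\setminus\{0\}$, and set $\rho_k=\frac1{|\mathbf p|^2}-\frac1{|\mathbf a+k\mathbf p|^2}$ for $k\in\mathbb{Z}$. Suppose that $\sqrt{-\rho_1(\rho_0+\rho_2)}$ or $\sqrt{-\rho_{-1}(\rho_0+\rho_{-2})}$ is a positive real number. Then the infinite matrix $M=(M_{j,k})_{j,k\in\mathbb{Z}}$ with $M_{j,j+1}=\rho_{j+1}$, $M_{j,j-1}=-\rho_{j-1}$ and all other entries zero has a positive real eigenvalue $\lambda$, and an associated eigenvector lies in $\ell^2(\mathbb{Z})$; that is, there exist $\lambda>0$ and a nonzero real sequence $\mathbf v=(v_k)_{k\in\mathbb{Z}}\in\ell^2(\mathbb{Z})$ with $\lambda v_k=\rho_{k+1}v_{k+1}-\rho_{k-1}v_{k-1}$ for all $k\in\mathbb{Z}$.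
   Context: $M$ is (up to a scalar factor) the linearisation of the 2D Euler equations on the torus, written in Fourier coefficients $\omega_{\mathbf a+k\mathbf p}$, about the equilibrium with Fourier coefficients nonzero only at $\pm\mathbf p$, restricted to the invariant subspace of modes $\{\mathbf a+k\mathbf p:k\in\mathbb{Z}\}$. *)

theory Defs
  imports "HOL-Analysis.Analysis"
begin

definition vnorm :: "int \<times> int \<Rightarrow> real" where
  "vnorm v = sqrt ((real_of_int (fst v))\<^sup>2 + (real_of_int (snd v))\<^sup>2)"

definition vadd_mult :: "int \<times> int \<Rightarrow> int \<Rightarrow> int \<times> int \<Rightarrow> int \<times> int" where
  "vadd_mult a k p = (fst a + k * fst p, snd a + k * snd p)"

definition rho :: "int \<times> int \<Rightarrow> int \<times> int \<Rightarrow> int \<Rightarrow> real" where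
  "rho p a k = 1 / (vnorm p)\<^sup>2 - 1 / (vnorm (vadd_mult a k p))\<^sup>2"

end

theory Submission
  imports Defs
begin

text \<open>Put \<open>\<mu> = \<lambda>\<^sup>2\<close>. Writing the odd entries of the eigenvector as \<open>v\<^sub>2\<^sub>m\<^sub>+\<^sub>1 = u\<^sub>m / \<rho>\<^sub>2\<^sub>m\<^sub>+\<^sub>1\<close> and the
  even ones as \<open>v\<^sub>2\<^sub>m = (u\<^sub>m - u\<^sub>m\<^sub>-\<^sub>1) / \<lambda>\<close> turns the eigenvalue equation into the discrete
  Sturm--Liouville equation
  \<open>\<rho>\<^sub>2\<^sub>m\<^sub>+\<^sub>2 (u\<^sub>m\<^sub>+\<^sub>1 - u\<^sub>m) - \<rho>\<^sub>2\<^sub>m (u\<^sub>m - u\<^sub>m\<^sub>-\<^sub>1) = \<mu> u\<^sub>m / \<rho>\<^sub>2\<^sub>m\<^sub>+\<^sub>1\<close>,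
  all of whose coefficients are positive except \<open>\<rho>\<^sub>0 < 0\<close>.
  On each half-line \<open>m \<ge> 0\<close> and \<open>m \<le> -1\<close> a shooting argument over the initial slope in \<open>[0, 1]\<close>
  yields a unique positive decreasing solution, with summable weighted entries and
  depending continuously on \<open>\<mu>\<close>. Scaling the two half-line solutions so that the equation
  also holds at \<open>m = 0\<close> and \<open>m = -1\<close> leaves one scalar equation in \<open>\<mu>\<close>, which the
  intermediate value theorem solves as soon as \<open>\<rho>\<^sub>0 + \<rho>\<^sub>2 < 0\<close> or \<open>\<rho>\<^sub>0 + \<rho>\<^sub>-\<^sub>2 < 0\<close>.\<close>

section \<open>The discrete Sturm--Liouville equation on a half-line\<close>

text \<open>Neither \<open>a 0\<close> nor \<open>b 0\<close> enters the equation; for the right half-line of the main problem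
  \<open>a 0 = \<rho>\<^sub>0\<close> is the one negative coefficient.\<close>

definition sturm_liouville :: "(nat \<Rightarrow> real) \<Rightarrow> (nat \<Rightarrow> real) \<Rightarrow> real \<Rightarrow> (nat \<Rightarrow> real) \<Rightarrow> bool" where
  "sturm_liouville a b mu x \<longleftrightarrow>
     (\<forall>n. a (Suc (Suc n)) * (x (Suc (Suc n)) - x (Suc n)) - a (Suc n) * (x (Suc n) - x n)
          = mu * b (Suc n) * x (Suc n))"

lemma sturm_liouville_step:
  "sturm_liouville a b mu x \<Longrightarrow>
   a (Suc (Suc n)) * (x (Suc (Suc n)) - x (Suc n)) = a (Suc n) * (x (Suc n) - x n) + mu * b (Suc n) * x (Suc n)"
  unfolding sturm_liouville_def by (metis diff_eq_eq add.commute)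

lemma sturm_liouville_lincomb:
  assumes "sturm_liouville a b mu x" and "sturm_liouville a b mu y"
  shows "sturm_liouville a b mu (\<lambda>n. c * x n + d * y n)"
  unfolding sturm_liouville_def
proof
  fix n
  have "a (Suc (Suc n)) * (c * x (Suc (Suc n)) + d * y (Suc (Suc n)) - (c * x (Suc n) + d * y (Suc n)))
      - a (Suc n) * (c * x (Suc n) + d * y (Suc n) - (c * x n + d * y n))
      = c * (a (Suc (Suc n)) * (x (Suc (Suc n)) - x (Suc n)) - a (Suc n) * (x (Suc n) - x n))
      + d * (a (Suc (Suc n)) * (y (Suc (Suc n)) - y (Suc n)) - a (Suc n) * (y (Suc n) - y n))"
    by (simp add: algebra_simps)
  also have "\<dots> = mu * b (Suc n) * (c * x (Suc n) + d * y (Suc n))"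
    using assms unfolding sturm_liouville_def by (simp add: algebra_simps)
  finally show "a (Suc (Suc n)) * (c * x (Suc (Suc n)) + d * y (Suc (Suc n)) - (c * x (Suc n) + d * y (Suc n)))
      - a (Suc n) * (c * x (Suc n) + d * y (Suc n) - (c * x n + d * y n))
      = mu * b (Suc n) * (c * x (Suc n) + d * y (Suc n))" .
qed

lemma sturm_liouville_scale:
  "sturm_liouville a b mu x \<Longrightarrow> sturm_liouville a b mu (\<lambda>n. c * x n)"
  using sturm_liouville_lincomb[of a b mu x x c 0] by simp

lemma sturm_liouville_telescope:
  assumes "sturm_liouville a b mu x"
  shows "a (Suc n) * (x (Suc n) - x n) = a 1 * (x 1 - x 0) + mu * (\<Sum>j<n. b (Suc j) * x (Suc j))"
proof (induction n)
  case (Suc n)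
  then show ?case
    using sturm_liouville_step[OF assms, of n] by (simp add: algebra_simps)
qed simp

fun shoot :: "(nat \<Rightarrow> real) \<Rightarrow> (nat \<Rightarrow> real) \<Rightarrow> real \<Rightarrow> real \<Rightarrow> nat \<Rightarrow> real" where
  "shoot a b mu t 0 = 1"
| "shoot a b mu t (Suc 0) = t"
| "shoot a b mu t (Suc (Suc n)) = shoot a b mu t (Suc n) +
     (a (Suc n) * (shoot a b mu t (Suc n) - shoot a b mu t n) + mu * b (Suc n) * shoot a b mu t (Suc n))
       / a (Suc (Suc n))"

lemma sturm_liouville_shoot:
  assumes "\<And>n. a (Suc n) \<noteq> 0"
  shows "sturm_liouville a b mu (shoot a b mu t)"
  unfolding sturm_liouville_def using assms by (simp add: field_simps)

lemma continuous_on_shoot: "continuous_on UNIV (\<lambda>z. shoot a b (fst z) (snd z) n)"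
proof -
  have "continuous_on UNIV (\<lambda>z. shoot a b (fst z) (snd z) n)
      \<and> continuous_on UNIV (\<lambda>z. shoot a b (fst z) (snd z) (Suc n))"
    by (induction n) (auto simp: divide_inverse intro!: continuous_intros)
  then show ?thesis ..
qed

declare shoot.simps(3) [simp del]

definition escapes_up :: "(nat \<Rightarrow> real) \<Rightarrow> bool" where
  "escapes_up x \<longleftrightarrow> (\<exists>n. x n < x (Suc n) \<and> 0 < x (Suc n))"

definition escapes_down :: "(nat \<Rightarrow> real) \<Rightarrow> bool" where
  "escapes_down x \<longleftrightarrow> (\<exists>n. x (Suc n) < x n \<and> x (Suc n) < 0)"

lemma sturm_liouville_increasing_from:
  assumes x: "sturm_liouville a b mu x"
    and a: "\<And>n. 0 < a (Suc n)" and b: "\<And>n. 0 \<le> b n" and mu: "0 \<le> mu"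
    and start: "x n < x (Suc n)" "0 < x (Suc n)" and "n \<le> j"
  shows "x j < x (Suc j) \<and> 0 < x (Suc j)"
  using \<open>n \<le> j\<close>
proof (induction j rule: dec_induct)
  case (step j)
  have "0 < a (Suc j) * (x (Suc j) - x j) + mu * b (Suc j) * x (Suc j)"
    using step.IH a b mu by (simp add: add_pos_nonneg)
  then have "0 < a (Suc (Suc j)) * (x (Suc (Suc j)) - x (Suc j))"
    using sturm_liouville_step[OF x] by simp
  then have "x (Suc j) < x (Suc (Suc j))"
    using a zero_less_mult_pos by (metis diff_gt_0_iff_gt)
  then show ?case
    using step.IH by simp
qed (use start in simp)

lemma sturm_liouville_decreasing_from:
  assumes x: "sturm_liouville a b mu x"
    and a: "\<And>n. 0 < a (Suc n)" and b: "\<And>n. 0 \<le> b n" and mu: "0 \<le> mu"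
    and start: "x (Suc n) < x n" "x (Suc n) < 0" and "n \<le> j"
  shows "x (Suc j) < x j \<and> x (Suc j) < 0"
  using sturm_liouville_increasing_from[OF sturm_liouville_scale[OF x, of "-1"] a b mu, of n j]
    start \<open>n \<le> j\<close> by simp

lemma sturm_liouville_not_escapes_up_and_down:
  assumes x: "sturm_liouville a b mu x"
    and a: "\<And>n. 0 < a (Suc n)" and b: "\<And>n. 0 \<le> b n" and mu: "0 \<le> mu"
  shows "\<not> (escapes_up x \<and> escapes_down x)"
proof
  assume "escapes_up x \<and> escapes_down x"
  then obtain n m where "x n < x (Suc n)" "0 < x (Suc n)" "x (Suc m) < x m" "x (Suc m) < 0"
    unfolding escapes_up_def escapes_down_def by blast
  then show False
    using sturm_liouville_increasing_from[OF x a b mu, of n "max n m"]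
      sturm_liouville_decreasing_from[OF x a b mu, of m "max n m"] by simp
qed

text \<open>A solution that escapes neither way and starts positive stays positive: a sign change,
  or a zero followed by the forced strict descent, would already be a downward escape.\<close>

lemma sturm_liouville_trapped_pos_decreasing:
  assumes x: "sturm_liouville a b mu x"
    and a: "\<And>n. 0 < a (Suc n)" and b: "\<And>n. 0 \<le> b n" and mu: "0 \<le> mu"
    and x0: "0 < x 0" and up: "\<not> escapes_up x" and down: "\<not> escapes_down x"
  shows "0 < x n" and "x (Suc n) \<le> x n"
proof -
  show pos: "0 < x n" for n
  proof (induction n)
    case (Suc n)
    show ?case
    proof (rule ccontr)
      assume "\<not> 0 < x (Suc n)"
      then consider "x (Suc n) < 0" | "x (Suc n) = 0" by linarith
      then show False
      proof cases
        case 1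
        then have "escapes_down x"
          using Suc.IH unfolding escapes_down_def by (intro exI[of _ n]) simp
        with down show False ..
      next
        case 2
        have "a (Suc (Suc n)) * x (Suc (Suc n)) = - a (Suc n) * x n"
          using sturm_liouville_step[OF x, of n] 2 by simp
        also have "\<dots> < 0" using a Suc.IH by simp
        finally have "x (Suc (Suc n)) < 0"
          using a[of "Suc n"] by (simp add: mult_less_0_iff)
        then have "escapes_down x"
          using 2 unfolding escapes_down_def by (intro exI[of _ "Suc n"]) simp
        with down show False ..
      qed
    qed
  qed (use x0 in simp)
  show "x (Suc n) \<le> x n"
    using up pos[of "Suc n"] unfolding escapes_up_def by (meson not_less)
qed

lemma sturm_liouville_trapped_weighted_summable:
  assumes x: "sturm_liouville a b mu x"
    and a: "\<And>n. 0 < a (Suc n)" and b: "\<And>n. 0 \<le> b n" and mu: "0 < mu"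
    and x0: "0 < x 0" and up: "\<not> escapes_up x" and down: "\<not> escapes_down x"
  shows "summable (\<lambda>n. b n * x n)"
proof -
  note trapped = sturm_liouville_trapped_pos_decreasing[OF x a b less_imp_le[OF mu] x0 up down]
  have bound: "(\<Sum>j<n. b (Suc j) * x (Suc j)) \<le> a 1 * x 0 / mu" for n
  proof -
    have "a (Suc n) * (x (Suc n) - x n) \<le> 0"
      using trapped(2) a[of n] by (simp add: mult_nonneg_nonpos)
    moreover have "- (a 1 * x 0) \<le> a 1 * (x 1 - x 0)"
      using trapped(1)[of 1] a[of 0] by (simp add: algebra_simps)
    ultimately have "mu * (\<Sum>j<n. b (Suc j) * x (Suc j)) \<le> a 1 * x 0"
      using sturm_liouville_telescope[OF x, of n] by linarith
    then show ?thesis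
      using mu by (simp add: field_simps mult.commute)
  qed
  have "summable (\<lambda>j. b (Suc j) * x (Suc j))"
  proof (rule bounded_imp_summable)
    show "0 \<le> b (Suc n) * x (Suc n)" for n
      using b[of "Suc n"] trapped(1)[of "Suc n"] by simp
    show "(\<Sum>j\<le>n. b (Suc j) * x (Suc j)) \<le> a 1 * x 0 / mu" for n
      using bound[of "Suc n"] by (simp add: lessThan_Suc_atMost)
  qed
  then show ?thesis
    using summable_Suc_iff by blast
qed

lemma sturm_liouville_trapped_tendsto_zero:
  assumes x: "sturm_liouville a b mu x"
    and a: "\<And>n. 0 < a (Suc n)" and b: "\<And>n. 1 \<le> b n" and mu: "0 < mu"
    and x0: "0 < x 0" and up: "\<not> escapes_up x" and down: "\<not> escapes_down x"
  shows "x \<longlonglongrightarrow> 0"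
proof -
  have b0: "0 \<le> b n" for n
    using b order.trans zero_le_one by blast
  have pos: "0 < x n" for n
    using sturm_liouville_trapped_pos_decreasing(1)[OF x a b0 less_imp_le[OF mu] x0 up down] .
  have "summable x"
  proof (rule summable_comparison_test')
    show "summable (\<lambda>n. b n * x n)"
      using sturm_liouville_trapped_weighted_summable[OF x a b0 mu x0 up down] .
    show "norm (x n) \<le> b n * x n" for n
      using mult_right_mono[OF b, of "x n" n] pos[of n] by simp
  qed
  then show ?thesis
    by (rule summable_LIMSEQ_zero)
qed

text \<open>Shooting is monotone: the difference of two solutions with the same start and
  larger slope escapes upwards from the first step, so it stays above that slope gap.\<close>

lemma sturm_liouville_trapped_slope_not_less:
  assumes x: "sturm_liouville a b mu x" and y: "sturm_liouville a b mu y"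
    and a: "\<And>n. 0 < a (Suc n)" and b: "\<And>n. 1 \<le> b n" and mu: "0 < mu"
    and x0: "0 < x 0" and y0: "y 0 = x 0"
    and trapped_x: "\<not> escapes_up x" "\<not> escapes_down x"
    and trapped_y: "\<not> escapes_up y" "\<not> escapes_down y"
  shows "\<not> x 1 < y 1"
proof
  assume less: "x 1 < y 1"
  have b0: "0 \<le> b n" for n
    using b order.trans zero_le_one by blast
  define d where "d n = y n - x n" for n
  have d: "sturm_liouville a b mu d"
    unfolding d_def using sturm_liouville_lincomb[OF y x, of 1 "-1"] by simp
  have gap: "y 1 - x 1 \<le> d (Suc j)" for j
  proof (induction j)
    case (Suc j)
    then show ?case
      using sturm_liouville_increasing_from[OF d a b0 less_imp_le[OF mu], of 0 "Suc j"]
        less y0 by (simp add: d_def)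
  qed (simp add: d_def)
  have "eventually (\<lambda>n. y n < y 1 - x 1) sequentially"
    using sturm_liouville_trapped_tendsto_zero[OF y a b mu _ trapped_y] x0 y0 less
    by (intro order_tendstoD(2)) auto
  then obtain N where "\<forall>n\<ge>N. y n < y 1 - x 1"
    unfolding eventually_sequentially by blast
  then have "y (Suc N) < y 1 - x 1" by simp
  moreover have "0 < x (Suc N)"
    using sturm_liouville_trapped_pos_decreasing(1)[OF x a b0 less_imp_le[OF mu] x0 trapped_x] .
  ultimately show False
    using gap[of N] by (simp add: d_def)
qed

lemma open_Collect_escapes_up:
  fixes f :: "nat \<Rightarrow> 'a::topological_space \<Rightarrow> real"
  assumes "\<And>n. continuous_on UNIV (f n)"
  shows "open {z. escapes_up (\<lambda>n. f n z)}"
proof -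
  have "{z. escapes_up (\<lambda>n. f n z)} = (\<Union>n. {z. f n z < f (Suc n) z} \<inter> {z. 0 < f (Suc n) z})"
    unfolding escapes_up_def by auto
  then show ?thesis
    by (simp add: open_UN open_Int open_Collect_less assms continuous_on_const)
qed

lemma open_Collect_escapes_down:
  fixes f :: "nat \<Rightarrow> 'a::topological_space \<Rightarrow> real"
  assumes "\<And>n. continuous_on UNIV (f n)"
  shows "open {z. escapes_down (\<lambda>n. f n z)}"
proof -
  have "{z. escapes_down (\<lambda>n. f n z)} = (\<Union>n. {z. f (Suc n) z < f n z} \<inter> {z. f (Suc n) z < 0})"
    unfolding escapes_down_def by auto
  then show ?thesis
    by (simp add: open_UN open_Int open_Collect_less assms continuous_on_const)
qed

section \<open>Shooting for the decaying solution\<close>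

locale half_line_problem =
  fixes a b :: "nat \<Rightarrow> real"
  assumes a_pos: "\<And>n. 0 < a (Suc n)" and b_ge_1: "\<And>n. 1 \<le> b n"
begin

lemma b_nonneg: "0 \<le> b n"
  using b_ge_1 order.trans zero_le_one by blast

abbreviation trapped :: "real \<Rightarrow> real \<Rightarrow> bool" where
  "trapped mu t \<equiv> \<not> escapes_up (shoot a b mu t) \<and> \<not> escapes_down (shoot a b mu t)"

lemma shoot_solves: "sturm_liouville a b mu (shoot a b mu t)"
  using sturm_liouville_shoot a_pos by (metis less_irrefl)

lemma escapes_up_shoot_one:
  assumes "0 < mu"
  shows "escapes_up (shoot a b mu 1)"
proof -
  have "0 < mu * b 1 / a 2"
    using assms b_ge_1[of 1] a_pos[of 1] by (simp add: numeral_2_eq_2)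
  then show ?thesis
    unfolding escapes_up_def by (intro exI[of _ 1]) (simp add: numeral_2_eq_2 shoot.simps)
qed

lemma escapes_down_shoot_zero: "escapes_down (shoot a b mu 0)"
proof -
  have "- a 1 / a 2 < 0"
    using a_pos[of 0] a_pos[of 1] by (simp add: numeral_2_eq_2)
  then show ?thesis
    unfolding escapes_down_def by (intro exI[of _ 1]) (simp add: numeral_2_eq_2 shoot.simps)
qed

lemma open_escaping_shots:
  "open {z. escapes_up (shoot a b (fst z) (snd z))}" "open {z. escapes_down (shoot a b (fst z) (snd z))}"
  using open_Collect_escapes_up[of "\<lambda>n z. shoot a b (fst z) (snd z) n"]
    open_Collect_escapes_down[of "\<lambda>n z. shoot a b (fst z) (snd z) n"]
  by (simp_all add: continuous_on_shoot)

text \<open>Shooting: the slopes escaping upwards and downwards form disjoint open sets,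
  containing 1 and 0 respectively, so they cannot cover the connected segment.\<close>

lemma exists_trapped:
  assumes mu: "0 < mu"
  shows "\<exists>t\<in>{0..1}. trapped mu t"
proof (rule ccontr)
  assume none: "\<not> ?thesis"
  let ?K = "{mu} \<times> {0..1::real}"
  let ?U = "{z. escapes_up (shoot a b (fst z) (snd z))}"
  let ?D = "{z. escapes_down (shoot a b (fst z) (snd z))}"
  have "?U \<inter> ?D \<inter> ?K = {}"
    using sturm_liouville_not_escapes_up_and_down[OF shoot_solves a_pos b_nonneg] mu
    by auto
  moreover have "?K \<subseteq> ?U \<union> ?D"
    using none by auto
  ultimately have "?U \<inter> ?K = {} \<or> ?D \<inter> ?K = {}"
    using connectedD[OF connected_Times[OF connected_sing connected_Icc] open_escaping_shots]
    by blast
  moreover have "(mu, 1) \<in> ?U \<inter> ?K" "(mu, 0) \<in> ?D \<inter> ?K"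
    using escapes_up_shoot_one[OF mu] escapes_down_shoot_zero by auto
  ultimately show False by blast
qed

lemma trapped_unique:
  assumes "0 < mu" "trapped mu s" "trapped mu t"
  shows "s = t"
  using sturm_liouville_trapped_slope_not_less[OF shoot_solves shoot_solves
      a_pos b_ge_1, of mu, simplified] assms
  by (metis linorder_neqE_linordered_idom)

definition slope :: "real \<Rightarrow> real" where
  "slope mu = (THE t. t \<in> {0..1} \<and> trapped mu t)"

lemma slope_spec:
  assumes "0 < mu"
  shows "slope mu \<in> {0..1}" and "trapped mu (slope mu)"
proof -
  have "\<exists>!t. t \<in> {0..1} \<and> trapped mu t"
    using exists_trapped[OF assms] trapped_unique[OF assms] by blast
  then have "slope mu \<in> {0..1} \<and> trapped mu (slope mu)"
    unfolding slope_def by (rule theI')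
  then show "slope mu \<in> {0..1}" and "trapped mu (slope mu)" by blast+
qed

lemma slope_eqI: "0 < mu \<Longrightarrow> trapped mu t \<Longrightarrow> slope mu = t"
  using trapped_unique slope_spec(2) by blast

lemma continuous_on_slope: "continuous_on {0<..} slope"
proof -
  let ?U = "{z. escapes_up (shoot a b (fst z) (snd z))}"
  let ?D = "{z. escapes_down (shoot a b (fst z) (snd z))}"
  have graph: "(\<lambda>mu. (mu, slope mu)) ` {0<..} = ({0<..} \<times> {0..1}) \<inter> - (?U \<union> ?D)"
  proof (intro equalityI subsetI)
    fix z assume "z \<in> ({0<..} \<times> {0..1}) \<inter> - (?U \<union> ?D)"
    then show "z \<in> (\<lambda>mu. (mu, slope mu)) ` {0<..}"
      using slope_eqI[of "fst z" "snd z"] by (auto intro: image_eqI[of _ _ "fst z"])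
  qed (use slope_spec in auto)
  have "closedin (top_of_set ({0<..} \<times> {0..1})) ((\<lambda>mu. (mu, slope mu)) ` {0<..})"
    unfolding graph using open_escaping_shots by (intro closedin_closed_Int) auto
  then show ?thesis
    using slope_spec(1) by (subst continuous_closed_graph_eq) auto
qed

text \<open>For the decaying solution \<open>x\<close> (so \<open>x 0 = 1\<close>), \<open>flux \<mu> = \<mu> b\<^sub>0 x\<^sub>0 - a\<^sub>1 (x\<^sub>1 - x\<^sub>0)\<close>: the equation
  at \<open>0\<close> for an extension of \<open>x\<close> to \<open>-1\<close> then reads \<open>a\<^sub>0 (x\<^sub>0 - x\<^sub>-\<^sub>1) = - flux \<mu>\<close>.\<close>

definition flux :: "real \<Rightarrow> real" where
  "flux mu = a 1 * (1 - slope mu) + mu * b 0"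

lemma flux_bounds:
  assumes "0 < mu"
  shows "mu \<le> flux mu" and "flux mu \<le> a 1 + mu * b 0"
proof -
  have "0 \<le> a 1 * (1 - slope mu)" "a 1 * (1 - slope mu) \<le> a 1" "mu \<le> mu * b 0"
    using slope_spec(1)[OF assms] a_pos[of 0] b_ge_1[of 0] assms by (simp_all add: mult_left_le)
  then show "mu \<le> flux mu" and "flux mu \<le> a 1 + mu * b 0"
    unfolding flux_def by linarith+
qed

lemma continuous_on_flux: "continuous_on {0<..} flux"
  unfolding flux_def by (intro continuous_intros continuous_on_slope)

lemma shoot_slope_pos: "0 < mu \<Longrightarrow> 0 < shoot a b mu (slope mu) n"
  using sturm_liouville_trapped_pos_decreasing(1)[OF shoot_solves a_pos b_nonneg]
    slope_spec(2) by simp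

lemma shoot_slope_weighted_summable:
  "0 < mu \<Longrightarrow> summable (\<lambda>n. b n * shoot a b mu (slope mu) n)"
  using sturm_liouville_trapped_weighted_summable[OF shoot_solves a_pos b_nonneg]
    slope_spec(2) by simp

end

section \<open>The two-sided equation and the eigenvector\<close>

text \<open>With \<open>H = R * L - c * (R + L) = (R - c) * (L - c) - c\<^sup>2\<close>, the growth of \<open>R\<close> and \<open>L\<close>
  makes \<open>H\<close> positive for large arguments, while \<open>R < c\<close> (or \<open>L < c\<close>) makes it negative.\<close>

lemma exists_pos_mult_eq_add:
  fixes R L :: "real \<Rightarrow> real"
  assumes cont: "continuous_on {0<..} R" "continuous_on {0<..} L"
    and R_ge: "\<And>mu. 0 < mu \<Longrightarrow> mu \<le> R mu" and L_ge: "\<And>mu. 0 < mu \<Longrightarrow> mu \<le> L mu"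
    and c: "0 < c" and small: "\<exists>mu>0. R mu < c \<or> L mu < c"
  shows "\<exists>mu>0. R mu * L mu = c * (R mu + L mu)"
proof -
  define H where "H mu = R mu * L mu - c * (R mu + L mu)" for mu
  obtain m1 where m1: "0 < m1" "R m1 < c \<or> L m1 < c"
    using small by blast
  have pos: "0 < R m1" "0 < L m1"
    using R_ge[OF m1(1)] L_ge[OF m1(1)] m1(1) by linarith+
  have "H m1 = L m1 * (R m1 - c) - c * R m1" "H m1 = R m1 * (L m1 - c) - c * L m1"
    unfolding H_def by (simp_all add: algebra_simps)
  moreover have "L m1 * (R m1 - c) < 0 \<or> R m1 * (L m1 - c) < 0"
    using m1(2) pos by (auto intro: mult_pos_neg)
  ultimately have "H m1 < 0"
    using pos c by (smt (verit) mult_pos_pos)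
  define m2 where "m2 = m1 + 3 * c"
  have m2: "0 < m2" "m1 \<le> m2"
    using m1 c by (simp_all add: m2_def)
  have "2 * c < R m2 - c" "2 * c < L m2 - c"
    using R_ge[OF m2(1)] L_ge[OF m2(1)] m1 by (simp_all add: m2_def)
  then have "(2 * c) * (2 * c) < (R m2 - c) * (L m2 - c)"
    using c by (intro mult_strict_mono) auto
  then have "c * c < (R m2 - c) * (L m2 - c)"
    using mult_pos_pos[OF c c] by simp
  then have "0 < H m2"
    unfolding H_def by (simp add: algebra_simps)
  have "continuous_on {m1..m2} H"
    unfolding H_def using m1(1)
    by (intro continuous_intros continuous_on_subset[OF cont(1)] continuous_on_subset[OF cont(2)]) auto
  then obtain mu where "m1 \<le> mu" "H mu = 0"
    using IVT'[of H m1 0 m2] \<open>H m1 < 0\<close> \<open>0 < H m2\<close> m2(2) by auto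
  then show ?thesis
    using m1(1) unfolding H_def by (intro exI[of _ mu]) auto
qed

definition sturm_liouville_int :: "(int \<Rightarrow> real) \<Rightarrow> (int \<Rightarrow> real) \<Rightarrow> real \<Rightarrow> (int \<Rightarrow> real) \<Rightarrow> bool" where
  "sturm_liouville_int A B mu u \<longleftrightarrow>
     (\<forall>m. A (m + 1) * (u (m + 1) - u m) - A m * (u m - u (m - 1)) = mu * B m * u m)"

text \<open>Both half-line solutions will be positive; \<open>u\<close> changes sign between \<open>-1\<close> and \<open>0\<close>.\<close>

definition glue :: "(nat \<Rightarrow> real) \<Rightarrow> (nat \<Rightarrow> real) \<Rightarrow> int \<Rightarrow> real" where
  "glue x y m = (if 0 \<le> m then x (nat m) else - y (nat (- 1 - m)))"

lemma glue_nonneg [simp]: "glue x y (int n) = x n"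
  by (simp add: glue_def)

lemma glue_neg [simp]: "glue x y (- 1 - int n) = - y n"
  by (simp add: glue_def)

lemma sturm_liouville_int_glue:
  assumes x: "sturm_liouville (\<lambda>n. A (int n)) (\<lambda>n. B (int n)) mu x"
    and y: "sturm_liouville (\<lambda>n. A (- int n)) (\<lambda>n. B (- 1 - int n)) mu y"
    and at_0: "A 1 * (x 1 - x 0) - A 0 * (x 0 + y 0) = mu * B 0 * x 0"
    and at_minus_1: "A (- 1) * (y 1 - y 0) - A 0 * (x 0 + y 0) = mu * B (- 1) * y 0"
  shows "sturm_liouville_int A B mu (glue x y)"
  unfolding sturm_liouville_int_def
proof
  fix m :: int
  let ?u = "glue x y"
  consider (right) n where "m = int (Suc n)" | (zero) "m = 0" | (minus_one) "m = - 1"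
    | (left) n where "m = - int (Suc (Suc n))"
  proof -
    have "m \<ge> 1 \<or> m = 0 \<or> m = - 1 \<or> m \<le> - 2" by linarith
    moreover have "m \<ge> 1 \<Longrightarrow> m = int (Suc (nat (m - 1)))" "m \<le> - 2 \<Longrightarrow> m = - int (Suc (Suc (nat (- 2 - m))))"
      by simp_all
    ultimately show thesis using that by blast
  qed
  then show "A (m + 1) * (?u (m + 1) - ?u m) - A m * (?u m - ?u (m - 1)) = mu * B m * ?u m"
  proof cases
    case right
    have shift: "m + 1 = int (Suc (Suc n))" "m - 1 = int n"
      using right by simp_all
    have "?u (m + 1) = x (Suc (Suc n))" "?u m = x (Suc n)" "?u (m - 1) = x n"
      using shift right glue_nonneg by metis+
    then show ?thesis
      using x unfolding sturm_liouville_def shift right by simp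
  next
    case left
    have shift: "m + 1 = - 1 - int n" "m = - 1 - int (Suc n)" "m - 1 = - 1 - int (Suc (Suc n))"
      using left by simp_all
    have u: "?u (m + 1) = - y n" "?u m = - y (Suc n)" "?u (m - 1) = - y (Suc (Suc n))"
      using shift glue_neg by metis+
    have coeff: "A (m + 1) = A (- int (Suc n))" "A m = A (- int (Suc (Suc n)))" "B m = B (- 1 - int (Suc n))"
      by (rule arg_cong[where f = A] arg_cong[where f = B], simp add: left)+
    have "A (- int (Suc (Suc n))) * (y (Suc (Suc n)) - y (Suc n)) - A (- int (Suc n)) * (y (Suc n) - y n)
        = mu * B (- 1 - int (Suc n)) * y (Suc n)"
      using y unfolding sturm_liouville_def by blast
    then show ?thesis
      unfolding u coeff by (simp add: algebra_simps)
  qed (use at_0 at_minus_1 in \<open>simp_all add: glue_def algebra_simps\<close>)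
qed

lemma summable_on_split_range:
  fixes f :: "'a \<Rightarrow> real"
  assumes "inj g" "inj h" "range g \<inter> range h = {}" "range g \<union> range h = UNIV"
    and "(f \<circ> g) summable_on UNIV" "(f \<circ> h) summable_on UNIV"
  shows "f summable_on UNIV"
  using summable_on_Un_disjoint[of f "range g" "range h"] summable_on_reindex[of g UNIV f]
    summable_on_reindex[of h UNIV f] assms by simp

lemma summable_on_int_even_odd:
  fixes f :: "int \<Rightarrow> real"
  assumes "(\<lambda>m. f (2 * m)) summable_on UNIV" "(\<lambda>m. f (2 * m + 1)) summable_on UNIV"
  shows "f summable_on UNIV"
proof (rule summable_on_split_range)
  show "range (\<lambda>m::int. 2 * m) \<inter> range (\<lambda>m. 2 * m + 1) = {}"
    by auto presburger
  show "range (\<lambda>m::int. 2 * m) \<union> range (\<lambda>m. 2 * m + 1) = UNIV"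
    by (auto simp: image_iff) presburger
qed (use assms in \<open>simp_all add: inj_on_def comp_def\<close>)

lemma summable_on_int_halves:
  fixes f :: "int \<Rightarrow> real"
  assumes "\<And>k. 0 \<le> f k" and "summable (\<lambda>n. f (int n))" and "summable (\<lambda>n. f (- 1 - int n))"
  shows "f summable_on UNIV"
proof (rule summable_on_split_range)
  show "range int \<inter> range (\<lambda>n. - 1 - int n) = {}"
    by auto
  show "range int \<union> range (\<lambda>n. - 1 - int n) = UNIV"
  proof (intro set_eqI iffI)
    fix k :: int
    show "k \<in> range int \<union> range (\<lambda>n. - 1 - int n)"
      using image_eqI[of k int "nat k"] image_eqI[of k "\<lambda>n. - 1 - int n" "nat (- 1 - k)"]
      by (cases "0 \<le> k") auto
  qed simp
qed (use assms in \<open>simp_all add: inj_on_def comp_def summable_on_UNIV_nonneg_real_iff\<close>)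

definition interleave :: "real \<Rightarrow> (int \<Rightarrow> real) \<Rightarrow> (int \<Rightarrow> real) \<Rightarrow> int \<Rightarrow> real" where
  "interleave lam r u k = (if even k then (u (k div 2) - u (k div 2 - 1)) / lam else u (k div 2) / r k)"

lemma interleave_even [simp]: "interleave lam r u (2 * m) = (u m - u (m - 1)) / lam"
  by (simp add: interleave_def)

lemma interleave_odd [simp]: "interleave lam r u (2 * m + 1) = u m / r (2 * m + 1)"
  by (simp add: interleave_def)

text \<open>At even indices the eigenvalue equation is the definition of the even entries,
  at odd indices it is the recurrence for \<open>u\<close>.\<close>

lemma interleave_eigen:
  assumes lam: "0 < lam" and r_odd: "\<And>m. r (2 * m + 1) \<noteq> 0"
    and u: "sturm_liouville_int (\<lambda>m. r (2 * m)) (\<lambda>m. 1 / r (2 * m + 1)) (lam\<^sup>2) u"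
  shows "lam * interleave lam r u k
    = r (k + 1) * interleave lam r u (k + 1) - r (k - 1) * interleave lam r u (k - 1)"
proof (cases "even k")
  case True
  then obtain m where k: "k = 2 * m" by blast
  have "k - 1 = 2 * (m - 1) + 1"
    using k by simp
  then have "interleave lam r u (k + 1) = u m / r (k + 1)" "interleave lam r u (k - 1) = u (m - 1) / r (k - 1)"
    unfolding k by (simp_all only: interleave_odd)
  moreover have "r (k + 1) \<noteq> 0" "r (k - 1) \<noteq> 0"
    using r_odd[of m] r_odd[of "m - 1"] \<open>k - 1 = 2 * (m - 1) + 1\<close> k by simp_all
  ultimately show ?thesis
    using lam by (simp add: k)
next
  case False
  then obtain m where k: "k = 2 * m + 1" using oddE by blast
  have shift: "k + 1 = 2 * (m + 1)" "k - 1 = 2 * m"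
    using k by simp_all
  have v: "interleave lam r u k = u m / r (2 * m + 1)"
    unfolding k by (rule interleave_odd)
  have v_succ: "interleave lam r u (k + 1) = (u (m + 1) - u m) / lam"
    unfolding shift interleave_even by simp
  have v_pred: "interleave lam r u (k - 1) = (u m - u (m - 1)) / lam"
    unfolding shift by (rule interleave_even)
  have "r (k + 1) * interleave lam r u (k + 1) - r (k - 1) * interleave lam r u (k - 1)
      = (r (2 * (m + 1)) * (u (m + 1) - u m) - r (2 * m) * (u m - u (m - 1))) / lam"
    unfolding v_succ v_pred unfolding shift by (simp add: diff_divide_distrib right_diff_distrib)
  also have "\<dots> = lam\<^sup>2 * (1 / r (2 * m + 1)) * u m / lam"
    using u unfolding sturm_liouville_int_def by presburger
  also have "\<dots> = lam * interleave lam r u k"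
    unfolding v using lam by (simp add: power2_eq_square)
  finally show ?thesis ..
qed

lemma interleave_square_summable:
  assumes lam: "0 < lam"
    and u: "(\<lambda>m. (u m)\<^sup>2) summable_on UNIV" and u_div: "(\<lambda>m. (u m / r (2 * m + 1))\<^sup>2) summable_on UNIV"
  shows "(\<lambda>k. (interleave lam r u k)\<^sup>2) summable_on UNIV"
proof (rule summable_on_int_even_odd)
  have "(\<lambda>m. (u (m - 1))\<^sup>2) summable_on UNIV"
    using summable_on_reindex[of "\<lambda>m::int. m - 1" UNIV "\<lambda>m. (u m)\<^sup>2"] u
    by (simp add: inj_on_def comp_def surj_def)
  then have "(\<lambda>m. 2 / lam\<^sup>2 * ((u m)\<^sup>2 + (u (m - 1))\<^sup>2)) summable_on UNIV"
    using u by (intro summable_on_cmult_right summable_on_add)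
  moreover have "(interleave lam r u (2 * m))\<^sup>2 \<le> 2 / lam\<^sup>2 * ((u m)\<^sup>2 + (u (m - 1))\<^sup>2)" for m
  proof -
    have "(u m - u (m - 1))\<^sup>2 \<le> 2 * ((u m)\<^sup>2 + (u (m - 1))\<^sup>2)"
      using zero_le_power2[of "u m + u (m - 1)"] by (simp add: power2_eq_square algebra_simps)
    then show ?thesis
      using lam by (simp add: power_divide divide_right_mono)
  qed
  ultimately show "(\<lambda>m. (interleave lam r u (2 * m))\<^sup>2) summable_on UNIV"
    by (rule summable_on_comparison_test) simp_all
qed (use u_div in simp)

lemma summable_power2_nonneg:
  fixes f :: "nat \<Rightarrow> real"
  assumes f: "summable f" and nonneg: "\<And>n. 0 \<le> f n"
  shows "summable (\<lambda>n. (f n)\<^sup>2)"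
proof -
  have "eventually (\<lambda>n. f n < 1) sequentially"
    using summable_LIMSEQ_zero[OF f] by (rule order_tendstoD(2)) simp
  then obtain N where N: "\<And>n. N \<le> n \<Longrightarrow> f n < 1"
    unfolding eventually_sequentially by blast
  show ?thesis
  proof (rule summable_comparison_test'[OF f, of N])
    fix n assume "N \<le> n"
    then show "norm ((f n)\<^sup>2) \<le> f n"
      using N[of n] nonneg[of n] by (simp add: power2_eq_square mult_left_le)
  qed
qed

lemma exists_pos_add_mult_less:
  fixes alpha c beta :: real
  assumes "alpha < c" "0 < beta"
  shows "\<exists>mu>0. alpha + mu * beta < c"
proof (intro exI conjI)
  show "0 < (c - alpha) / (2 * beta)" and "alpha + (c - alpha) / (2 * beta) * beta < c"
    using assms by (simp_all add: field_simps)
qed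

lemma exists_flux_balance:
  assumes right: "half_line_problem aR bR" and left: "half_line_problem aL bL"
    and c: "0 < c" and small: "aR 1 < c \<or> aL 1 < c"
  defines "FR \<equiv> half_line_problem.flux aR bR" and "FL \<equiv> half_line_problem.flux aL bL"
  shows "\<exists>mu>0. FR mu * FL mu = c * (FR mu + FL mu)"
  unfolding FR_def FL_def
proof (rule exists_pos_mult_eq_add)
  interpret right: half_line_problem aR bR by (fact right)
  interpret left: half_line_problem aL bL by (fact left)
  show "continuous_on {0<..} right.flux" "continuous_on {0<..} left.flux"
    by (fact right.continuous_on_flux left.continuous_on_flux)+
  show "mu \<le> right.flux mu" "mu \<le> left.flux mu" if "0 < mu" for mu
    using right.flux_bounds(1) left.flux_bounds(1) that by blast+
  have "\<exists>mu>0. aR 1 + mu * bR 0 < c \<or> aL 1 + mu * bL 0 < c"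
    using small exists_pos_add_mult_less[of "aR 1" c "bR 0"] exists_pos_add_mult_less[of "aL 1" c "bL 0"]
      right.b_ge_1[of 0] left.b_ge_1[of 0] by fastforce
  then show "\<exists>mu>0. right.flux mu < c \<or> left.flux mu < c"
    using right.flux_bounds(2) left.flux_bounds(2) by (meson le_less_trans)
qed (fact c)

text \<open>Scaling the right solution by the left flux and vice versa makes the two boundary
  conditions of the gluing lemma coincide with the balance equation.\<close>

lemma exists_two_sided_decaying_solution:
  fixes A B :: "int \<Rightarrow> real"
  assumes right: "half_line_problem (\<lambda>n. A (int n)) (\<lambda>n. B (int n))"
    and left: "half_line_problem (\<lambda>n. A (- int n)) (\<lambda>n. B (- 1 - int n))"
    and A_0: "A 0 < 0" and small: "A 1 < - A 0 \<or> A (- 1) < - A 0"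
  shows "\<exists>mu>0. \<exists>u. sturm_liouville_int A B mu u \<and> 0 < u 0 \<and> (\<lambda>m. (B m * u m)\<^sup>2) summable_on UNIV"
proof -
  interpret right: half_line_problem "\<lambda>n. A (int n)" "\<lambda>n. B (int n)" by (fact right)
  interpret left: half_line_problem "\<lambda>n. A (- int n)" "\<lambda>n. B (- 1 - int n)" by (fact left)
  obtain mu where mu: "0 < mu"
    and balance: "right.flux mu * left.flux mu = - A 0 * (right.flux mu + left.flux mu)"
    using exists_flux_balance[OF right left, of "- A 0"] A_0 small by auto
  define x where "x n = left.flux mu * shoot (\<lambda>n. A (int n)) (\<lambda>n. B (int n)) mu (right.slope mu) n" for n
  define y where "y n = right.flux mu * shoot (\<lambda>n. A (- int n)) (\<lambda>n. B (- 1 - int n)) mu (left.slope mu) n" for n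
  have "sturm_liouville_int A B mu (glue x y)"
  proof (rule sturm_liouville_int_glue)
    show "sturm_liouville (\<lambda>n. A (int n)) (\<lambda>n. B (int n)) mu x"
      unfolding x_def by (intro sturm_liouville_scale right.shoot_solves)
    show "sturm_liouville (\<lambda>n. A (- int n)) (\<lambda>n. B (- 1 - int n)) mu y"
      unfolding y_def by (intro sturm_liouville_scale left.shoot_solves)
    show "A 1 * (x 1 - x 0) - A 0 * (x 0 + y 0) = mu * B 0 * x 0"
      using balance unfolding x_def y_def right.flux_def by (simp add: algebra_simps)
    show "A (- 1) * (y 1 - y 0) - A 0 * (x 0 + y 0) = mu * B (- 1) * y 0"
      using balance unfolding x_def y_def left.flux_def by (simp add: algebra_simps)
  qed
  moreover have "0 < glue x y 0"
    using left.flux_bounds(1)[OF mu] mu by (simp add: glue_def x_def)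
  moreover have "(\<lambda>m. (B m * glue x y m)\<^sup>2) summable_on UNIV"
  proof (rule summable_on_int_halves)
    have "summable (\<lambda>n. (left.flux mu)\<^sup>2 * (B (int n) * shoot (\<lambda>n. A (int n)) (\<lambda>n. B (int n)) mu (right.slope mu) n)\<^sup>2)"
      using right.shoot_slope_weighted_summable[OF mu] right.shoot_slope_pos[OF mu] right.b_nonneg
      by (intro summable_mult summable_power2_nonneg) (auto intro: mult_nonneg_nonneg less_imp_le)
    then show "summable (\<lambda>n. (B (int n) * glue x y (int n))\<^sup>2)"
      by (simp add: x_def power_mult_distrib algebra_simps)
    have "summable (\<lambda>n. (right.flux mu)\<^sup>2 * (B (- 1 - int n) * shoot (\<lambda>n. A (- int n)) (\<lambda>n. B (- 1 - int n)) mu (left.slope mu) n)\<^sup>2)"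
      using left.shoot_slope_weighted_summable[OF mu] left.shoot_slope_pos[OF mu] left.b_nonneg
      by (intro summable_mult summable_power2_nonneg) (auto intro: mult_nonneg_nonneg less_imp_le)
    then show "summable (\<lambda>n. (B (- 1 - int n) * glue x y (- 1 - int n))\<^sup>2)"
      by (simp add: y_def power_mult_distrib algebra_simps)
  qed simp
  ultimately show ?thesis
    using mu by blast
qed

lemma exists_l2_eigenvector:
  fixes r :: "int \<Rightarrow> real"
  assumes r_0: "r 0 < 0" and r_pos: "\<And>k. k \<noteq> 0 \<Longrightarrow> 0 < r k" and r_le_1: "\<And>k. k \<noteq> 0 \<Longrightarrow> r k \<le> 1"
    and two_step: "r 0 + r 2 < 0 \<or> r 0 + r (- 2) < 0"
  shows "\<exists>(lam::real) (v::int \<Rightarrow> real). lam > 0 \<and> v \<noteq> (\<lambda>_. 0)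
           \<and> (\<lambda>k. (v k)\<^sup>2) summable_on UNIV
           \<and> (\<forall>k. lam * v k = r (k + 1) * v (k + 1) - r (k - 1) * v (k - 1))"
proof -
  define A where "A = (\<lambda>m. r (2 * m))"
  define B where "B = (\<lambda>m. 1 / r (2 * m + 1))"
  have "2 * m + 1 \<noteq> 0" for m :: int
    by presburger
  then have r_odd: "0 < r (2 * m + 1)" "r (2 * m + 1) \<le> 1" for m
    using r_pos r_le_1 by blast+
  then have B_ge_1: "1 \<le> B m" for m
    by (simp add: B_def)
  have right: "half_line_problem (\<lambda>n. A (int n)) (\<lambda>n. B (int n))"
    and left: "half_line_problem (\<lambda>n. A (- int n)) (\<lambda>n. B (- 1 - int n))"
    using r_pos B_ge_1 by unfold_locales (simp_all add: A_def)
  have "A 0 < 0" "A 1 < - A 0 \<or> A (- 1) < - A 0"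
    using r_0 two_step by (auto simp: A_def)
  then obtain mu u where mu: "0 < mu" and u: "sturm_liouville_int A B mu u" and u_0: "0 < u 0"
    and Bu: "(\<lambda>m. (B m * u m)\<^sup>2) summable_on UNIV"
    using exists_two_sided_decaying_solution[OF right left] by blast
  define lam where "lam = sqrt mu"
  have lam: "0 < lam" "lam\<^sup>2 = mu"
    using mu by (simp_all add: lam_def)
  have "lam * interleave lam r u k
      = r (k + 1) * interleave lam r u (k + 1) - r (k - 1) * interleave lam r u (k - 1)" for k
    using interleave_eigen[OF lam(1)] r_odd(1) u lam(2)
    by (simp add: A_def B_def less_imp_neq[symmetric])
  moreover have "(\<lambda>k. (interleave lam r u k)\<^sup>2) summable_on UNIV"
  proof (rule interleave_square_summable[OF lam(1)])
    show u_div: "(\<lambda>m. (u m / r (2 * m + 1))\<^sup>2) summable_on UNIV"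
      using Bu by (simp add: B_def)
    have "(u m)\<^sup>2 \<le> (u m / r (2 * m + 1))\<^sup>2" for m
      using r_odd[of m] power_mono[of "\<bar>u m\<bar>" "\<bar>u m\<bar> / r (2 * m + 1)" 2]
      by (simp add: le_divide_eq mult_left_le power_divide)
    with u_div show "(\<lambda>m. (u m)\<^sup>2) summable_on UNIV"
      by (rule summable_on_comparison_test) simp
  qed
  moreover have "interleave lam r u 1 \<noteq> 0"
    using interleave_odd[of lam r u 0] u_0 r_odd(1)[of 0] by simp
  ultimately show ?thesis
    using lam(1) by (intro exI[of _ lam] exI[of _ "interleave lam r u"]) auto
qed

section \<open>The coefficients \<open>\<rho>\<^sub>k\<close>\<close>

lemma one_le_vnorm_sq:
  assumes "v \<noteq> (0, 0)"
  shows "1 \<le> (vnorm v)\<^sup>2"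
proof -
  have "fst v \<noteq> 0 \<or> snd v \<noteq> 0"
    using assms by (metis prod.collapse)
  then have "1 \<le> (fst v)\<^sup>2 + (snd v)\<^sup>2"
    by (metis add.commute add_increasing2 int_one_le_iff_zero_less zero_le_power2 zero_less_power2)
  then show ?thesis
    unfolding vnorm_def by (simp flip: of_int_power of_int_add)
qed

lemma vnorm_pos_iff: "0 < vnorm v \<longleftrightarrow> v \<noteq> (0, 0)"
  unfolding vnorm_def by (cases v) (simp add: sum_power2_gt_zero_iff)

lemma inverse_power2_strict_antimono:
  fixes x y :: real
  shows "0 < x \<Longrightarrow> x < y \<Longrightarrow> 1 / y\<^sup>2 < 1 / x\<^sup>2"
  by (simp add: divide_strict_left_mono power_strict_mono)

lemma rho_pos_le_one:
  assumes p: "p \<noteq> (0, 0)" and far: "vnorm p < vnorm (vadd_mult a k p)"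
  shows "0 < rho p a k" and "rho p a k \<le> 1"
proof -
  have "0 < vnorm p"
    using p vnorm_pos_iff by blast
  then have "1 / (vnorm (vadd_mult a k p))\<^sup>2 < 1 / (vnorm p)\<^sup>2"
    using far by (rule inverse_power2_strict_antimono)
  then show "0 < rho p a k"
    unfolding rho_def by simp
  have "1 / (vnorm p)\<^sup>2 \<le> 1" "0 \<le> 1 / (vnorm (vadd_mult a k p))\<^sup>2"
    using one_le_vnorm_sq[OF p] by (simp_all add: divide_le_eq)
  then show "rho p a k \<le> 1"
    unfolding rho_def by linarith
qed

text \<open>Without the hypothesis on \<open>a + p\<close>, \<open>a = 0\<close> would give \<open>\<rho>\<^sub>0 = 1 / |p|\<^sup>2\<close> (as \<open>1 / 0 = 0\<close>).\<close>

lemma rho_zero_neg: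
  assumes near: "vnorm a < vnorm p" and far: "vnorm p < vnorm (vadd_mult a 1 p)"
  shows "rho p a 0 < 0"
proof -
  have "a \<noteq> (0, 0)"
    using far by (auto simp: vadd_mult_def)
  then have "1 / (vnorm p)\<^sup>2 < 1 / (vnorm a)\<^sup>2"
    using near vnorm_pos_iff inverse_power2_strict_antimono by blast
  moreover have "vadd_mult a 0 p = a"
    by (simp add: vadd_mult_def)
  ultimately show ?thesis
    unfolding rho_def by simp
qed

theorem lemma5:
  fixes p a :: "int \<times> int"
  assumes "p \<noteq> (0, 0)"
    and "vnorm a < vnorm p"
    and "\<forall>k::int. k \<noteq> 0 \<longrightarrow> vnorm (vadd_mult a k p) > vnorm p"
    and "sqrt (- rho p a 1 * (rho p a 0 + rho p a 2)) > 0
         \<or> sqrt (- rho p a (-1) * (rho p a 0 + rho p a (-2))) > 0"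
  shows "\<exists>(lam::real) (v::int \<Rightarrow> real). lam > 0 \<and> v \<noteq> (\<lambda>_. 0)
           \<and> (\<lambda>k. (v k)\<^sup>2) summable_on UNIV
           \<and> (\<forall>k. lam * v k = rho p a (k + 1) * v (k + 1) - rho p a (k - 1) * v (k - 1))"
proof (rule exists_l2_eigenvector)
  show pos: "0 < rho p a k" and "rho p a k \<le> 1" if "k \<noteq> 0" for k
    using rho_pos_le_one assms(1,3) that by blast+
  show "rho p a 0 < 0"
    using rho_zero_neg assms(2,3) by simp
  have "0 < rho p a 1" "0 < rho p a (- 1)"
    using pos by simp_all
  then show "rho p a 0 + rho p a 2 < 0 \<or> rho p a 0 + rho p a (- 2) < 0"
    using assms(4) by (auto simp: mult_less_0_iff)
qed

end
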